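(* Let $G$ be a finite simple undirected graph with maximum degree $\Delta$. Then $$\operatorname{adim}(G) \geq \frac{2(|V(G)|-1)}{\Delta+3}.$$
   Context: For a graph $G$, $d(u,v)$ is the shortest-path distance ($\infty$ if $u,v$ lie in different components), and $d_1(u,v)=\min(d(u,v),2)$. A set $A\subseteq V(G)$ is an adjacency resolving set if for all distinct $x,y\in V(G)$ there is $z\in A$ with $d_1(z,x)\neq d_1(z,y)$. The adjacency dimension $\operatorname{adim}(G)$ is the minimum cardinality of an adjacency resolving set. *)

theory Defs
  imports Main "HOL-Library.Extended_Nat"
begin

definition simple_graph :: "'a set \<Rightarrow> ('a \<Rightarrow> 'a \<Rightarrow> bool) \<Rightarrow> bool" where
  "simple_graph V E \<longleftrightarrow> finite V \<and> (\<forall>x y. E x y \<longrightarrow> x \<in> V \<and> y \<in> V)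
     \<and> (\<forall>x y. E x y \<longrightarrow> E y x) \<and> (\<forall>x. \<not> E x x)"

definition degree :: "'a set \<Rightarrow> ('a \<Rightarrow> 'a \<Rightarrow> bool) \<Rightarrow> 'a \<Rightarrow> nat" where
  "degree V E v = card {u \<in> V. E v u}"

definition max_degree :: "'a set \<Rightarrow> ('a \<Rightarrow> 'a \<Rightarrow> bool) \<Rightarrow> nat" where
  "max_degree V E = Max (insert 0 (degree V E ` V))"

text \<open>A walk of length n from u to v (list of the n+1 vertices).\<close>
definition is_walk :: "'a set \<Rightarrow> ('a \<Rightarrow> 'a \<Rightarrow> bool) \<Rightarrow> 'a list \<Rightarrow> bool" where
  "is_walk V E p \<longleftrightarrow> p \<noteq> [] \<and> set p \<subseteq> V \<and> (\<forall>i < length p - 1. E (p ! i) (p ! Suc i))"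

text \<open>Shortest-path distance, \<infinity> if no path.\<close>
definition dist :: "'a set \<Rightarrow> ('a \<Rightarrow> 'a \<Rightarrow> bool) \<Rightarrow> 'a \<Rightarrow> 'a \<Rightarrow> enat" where
  "dist V E u v = (INF p \<in> {p. is_walk V E p \<and> hd p = u \<and> last p = v}. enat (length p - 1))"

definition dist1 :: "'a set \<Rightarrow> ('a \<Rightarrow> 'a \<Rightarrow> bool) \<Rightarrow> 'a \<Rightarrow> 'a \<Rightarrow> enat" where
  "dist1 V E u v = min (dist V E u v) 2"

definition adj_resolving :: "'a set \<Rightarrow> ('a \<Rightarrow> 'a \<Rightarrow> bool) \<Rightarrow> 'a set \<Rightarrow> bool" where
  "adj_resolving V E A \<longleftrightarrow> A \<subseteq> V \<and>
     (\<forall>x\<in>V. \<forall>y\<in>V. x \<noteq> y \<longrightarrow> (\<exists>z\<in>A. dist1 V E z x \<noteq> dist1 V E z y))"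

definition adim :: "'a set \<Rightarrow> ('a \<Rightarrow> 'a \<Rightarrow> bool) \<Rightarrow> nat" where
  "adim V E = (LEAST k. \<exists>A. adj_resolving V E A \<and> card A = k)"

end

theory Submission
  imports Defs
begin

text \<open>For distinct vertices z and x, the truncated distance d1(z, x) is 1 or 2 according as
  z is adjacent to x. Hence an adjacency resolving set A separates two vertices outside A only
  through their neighbourhood traces N(x) \<inter> A, so the trace map is injective on V - A. At most
  one trace is empty and at most |A| are singletons; all others have at least two elements.
  Counting trace sizes against the degrees of the vertices of A gives
  2(|V| - |A|) \<le> |A| \<Delta> + |A| + 2.\<close>

lemma is_walk_distinct_ends_length:
  assumes "is_walk V E p" "hd p \<noteq> last p"
  shows "length p \<ge> 2"
proof -
  have "p \<noteq> []" using assms(1) unfolding is_walk_def by simp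
  moreover have "\<not> (\<exists>a. p = [a])" using assms(2) by auto
  ultimately show ?thesis by (cases p) (auto simp: Suc_le_eq)
qed

lemma is_walk_nonadjacent_ends_length:
  assumes "is_walk V E p" "hd p \<noteq> last p" "\<not> E (hd p) (last p)"
  shows "length p \<ge> 3"
proof (rule ccontr)
  assume "\<not> length p \<ge> 3"
  with is_walk_distinct_ends_length[OF assms(1,2)] have "length p = 2" by simp
  then obtain a b where p: "p = [a, b]"
    by (auto simp: length_Suc_conv numeral_2_eq_2)
  have "E (p ! 0) (p ! 1)" using assms(1) p unfolding is_walk_def by auto
  with assms(3) p show False by simp
qed

lemma dist_le_walk_length:
  assumes "is_walk V E p"
  shows "dist V E (hd p) (last p) \<le> enat (length p - 1)"
  unfolding dist_def using assms by (intro INF_lower) simp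

lemma dist1_self:
  assumes "z \<in> V"
  shows "dist1 V E z z = 0"
proof -
  have "is_walk V E [z]" using assms unfolding is_walk_def by simp
  from dist_le_walk_length[OF this] show ?thesis
    unfolding dist1_def by (simp add: zero_enat_def[symmetric])
qed

lemma dist1_distinct:
  assumes "z \<in> V" "x \<in> V" "z \<noteq> x"
  shows "dist1 V E z x = (if E z x then 1 else 2)"
proof (cases "E z x")
  case True
  have "is_walk V E [z, x]" using True assms unfolding is_walk_def by auto
  from dist_le_walk_length[OF this] have le: "dist V E z x \<le> 1"
    by (simp add: one_enat_def)
  have "dist V E z x \<ge> 1" unfolding dist_def
  proof (rule INF_greatest)
    fix p assume "p \<in> {p. is_walk V E p \<and> hd p = z \<and> last p = x}"
    with assms(3) have "length p \<ge> 2" using is_walk_distinct_ends_length by blast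
    then show "1 \<le> enat (length p - 1)" by (simp add: one_enat_def)
  qed
  with le True show ?thesis unfolding dist1_def by simp
next
  case False
  have "dist V E z x \<ge> 2" unfolding dist_def
  proof (rule INF_greatest)
    fix p assume "p \<in> {p. is_walk V E p \<and> hd p = z \<and> last p = x}"
    with assms(3) False have "length p \<ge> 3" using is_walk_nonadjacent_ends_length by blast
    then show "2 \<le> enat (length p - 1)" by (simp add: numeral_eq_enat)
  qed
  with False show ?thesis unfolding dist1_def by (simp add: min_def)
qed

lemma adj_resolving_self: "adj_resolving V E V"
  unfolding adj_resolving_def
proof (intro conjI ballI impI)
  fix x y assume "x \<in> V" "y \<in> V" "x \<noteq> y"
  then have "dist1 V E x x \<noteq> dist1 V E x y"
    using dist1_self[of x V E] dist1_distinct[of x V y E] by simp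
  with \<open>x \<in> V\<close> show "\<exists>z\<in>V. dist1 V E z x \<noteq> dist1 V E z y" by blast
qed simp

lemma adim_attained: "\<exists>A. adj_resolving V E A \<and> card A = adim V E"
  unfolding adim_def
  using LeastI_ex[of "\<lambda>k. \<exists>A. adj_resolving V E A \<and> card A = k"] adj_resolving_self by blast

lemma adj_resolving_trace_inj_on:
  assumes "adj_resolving V E A"
  shows "inj_on (\<lambda>x. {z \<in> A. E z x}) (V - A)"
proof (rule inj_onI)
  fix x y
  assume x: "x \<in> V - A" and y: "y \<in> V - A" and trace: "{z \<in> A. E z x} = {z \<in> A. E z y}"
  show "x = y"
  proof (rule ccontr)
    assume "x \<noteq> y"
    with assms x y obtain z where z: "z \<in> A" "dist1 V E z x \<noteq> dist1 V E z y"
      unfolding adj_resolving_def by blast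
    have "z \<in> V" "z \<noteq> x" "z \<noteq> y" using assms z(1) x y unfolding adj_resolving_def by auto
    moreover have "E z x = E z y" using trace z(1) by blast
    ultimately show False using z(2) x y dist1_distinct[of z V x E] dist1_distinct[of z V y E]
      by simp
  qed
qed

lemma inj_on_subset_family_card_bound:
  assumes "finite A" "finite B" "inj_on f B" "\<And>x. x \<in> B \<Longrightarrow> f x \<subseteq> A"
  shows "2 * card B \<le> (\<Sum>x\<in>B. card (f x)) + card A + 2"
proof -
  define B0 where "B0 = B \<inter> {x. f x = {}}"
  define B1 where "B1 = B \<inter> {x. card (f x) = 1}"
  have fin_f: "finite (f x)" if "x \<in> B" for x
    using assms(1,4) that finite_subset by blast
  have B0: "card B0 \<le> Suc 0"
    using assms(2,3) unfolding B0_def by (subst card_le_Suc0_iff_eq) (auto dest: inj_onD)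
  have "card B1 = card (f ` B1)"
    using assms(3) by (intro card_image[symmetric]) (auto simp: B1_def intro: inj_on_subset)
  also have "\<dots> \<le> card ((\<lambda>z. {z}) ` A)"
    using assms(1,4) by (intro card_mono) (auto simp: B1_def card_1_singleton_iff)
  also have "\<dots> \<le> card A"
    by (rule card_image_le[OF assms(1)])
  finally have B1: "card B1 \<le> card A" .
  have "2 * card B = (\<Sum>x\<in>B. 2::nat)" by simp
  also have "\<dots> \<le> (\<Sum>x\<in>B. card (f x) + of_bool (card (f x) = 1) + 2 * of_bool (f x = {}))"
  proof (rule sum_mono)
    fix x assume "x \<in> B"
    then have "f x \<noteq> {} \<Longrightarrow> card (f x) > 0" using fin_f by (simp add: card_gt_0_iff)
    then show "2 \<le> card (f x) + of_bool (card (f x) = 1) + 2 * of_bool (f x = {})"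
      by (cases "f x = {}") auto
  qed
  also have "\<dots> = (\<Sum>x\<in>B. card (f x)) + (\<Sum>x\<in>B. of_bool (card (f x) = 1))
                   + 2 * (\<Sum>x\<in>B. of_bool (f x = {}))"
    by (simp only: sum.distrib sum_distrib_left)
  also have "\<dots> = (\<Sum>x\<in>B. card (f x)) + card B1 + 2 * card B0"
    using assms(2) unfolding B0_def B1_def by (simp only: sum_of_bool_eq of_nat_id)
  finally show ?thesis using B0 B1 by linarith
qed

lemma degree_le_max_degree:
  assumes "finite V" "v \<in> V"
  shows "degree V E v \<le> max_degree V E"
  unfolding max_degree_def using assms by (intro Max_ge) auto

lemma sum_card_neighbours_le:
  assumes "finite V" "A \<subseteq> V" "B \<subseteq> V"
  shows "(\<Sum>x\<in>B. card {z \<in> A. E z x}) \<le> card A * max_degree V E"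
proof -
  have fin: "finite A" "finite B" using assms finite_subset by auto
  have "(\<Sum>x\<in>B. card {z \<in> A. E z x}) = (\<Sum>z\<in>A. card {x \<in> B. E z x})"
    using sum.swap_restrict[OF fin, of "\<lambda>_ _. 1::nat" E] by simp
  also have "\<dots> \<le> (\<Sum>z\<in>A. max_degree V E)"
  proof (rule sum_mono)
    fix z assume "z \<in> A"
    have "card {x \<in> B. E z x} \<le> degree V E z"
      unfolding degree_def using assms by (intro card_mono) auto
    also have "\<dots> \<le> max_degree V E"
      using assms \<open>z \<in> A\<close> by (intro degree_le_max_degree) auto
    finally show "card {x \<in> B. E z x} \<le> max_degree V E" .
  qed
  finally show ?thesis by simp
qed

lemma adj_resolving_card_bound:
  assumes "finite V" "adj_resolving V E A"
  shows "2 * card V \<le> card A * (max_degree V E + 3) + 2"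
proof -
  have AV: "A \<subseteq> V" using assms(2) unfolding adj_resolving_def by simp
  have finA: "finite A" using assms(1) AV finite_subset by blast
  have "2 * card (V - A) \<le> (\<Sum>x\<in>V - A. card {z \<in> A. E z x}) + card A + 2"
    using assms finA adj_resolving_trace_inj_on by (intro inj_on_subset_family_card_bound) auto
  also have "\<dots> \<le> card A * max_degree V E + card A + 2"
    using sum_card_neighbours_le[OF assms(1) AV, of "V - A" E] by simp
  finally have "2 * card (V - A) \<le> card A * max_degree V E + card A + 2" .
  moreover have "card V = card A + card (V - A)"
    using card_Diff_subset[OF finA AV] card_mono[OF assms(1) AV] by simp
  ultimately show ?thesis by (simp add: algebra_simps)
qed

theorem theorem1p13:
  fixes V :: "'a set" and E :: "'a \<Rightarrow> 'a \<Rightarrow> bool"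
  assumes "simple_graph V E"
  shows "real (adim V E) \<ge> 2 * (real (card V) - 1) / (real (max_degree V E) + 3)"
proof -
  obtain A where A: "adj_resolving V E A" "card A = adim V E"
    using adim_attained by blast
  have "finite V" using assms unfolding simple_graph_def by simp
  with adj_resolving_card_bound A
  have "2 * card V \<le> adim V E * (max_degree V E + 3) + 2" by metis
  then have "real (2 * card V) \<le> real (adim V E * (max_degree V E + 3) + 2)"
    by (simp only: of_nat_le_iff)
  then have "2 * (real (card V) - 1) \<le> real (adim V E) * (real (max_degree V E) + 3)"
    by (simp add: algebra_simps)
  then show ?thesis by (simp add: pos_divide_le_eq add_pos_nonneg)
qed

end
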